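(* Let $\mathbf{k}=\mathbb{R}$ or $\mathbb{C}$, let $(C^\bullet,\partial)$ be a complex of finite-dimensional $\mathbf{k}$-vector spaces of odd length $d=2r-1$ with a chirality operator $\Gamma$, and let $\langle\cdot,\cdot\rangle_j$ be Euclidean (if $\mathbf{k}=\mathbb{R}$) or Hermitian (if $\mathbf{k}=\mathbb{C}$) scalar products on $C^j$, $j=0,\dots,d$, such that $\Gamma$ is self-adjoint. Let $\|\cdot\|_{\operatorname{Det}(H^\bullet(\partial))}$ be the metric on $\operatorname{Det}(H^\bullet(\partial))$ for which $\phi_{C^\bullet}$ is an isometry, where $\operatorname{Det}(C^\bullet)$ carries the metric induced by the scalar products. Then $\|\rho_\Gamma\|_{\operatorname{Det}(H^\bullet(\partial))}=1$.
   Context: Determinant lines: $\operatorname{Det}(V)=\Lambda^{\dim V}V$, $\operatorname{Det}(0)=\mathbf{k}$, $L^{-1}=\operatorname{Hom}(L,\mathbf{k})$, $l^{-1}(l)=1$, $\operatorname{Det}(V^\bullet)=\bigotimes_j\operatorname{Det}(V^j)^{(-1)^j}$; $\mu_{V_1,\dots,V_r}$ is the fusion isomorphism given by concatenating wedges. The isomorphism $\phi_{C^\bullet}:\operatorname{Det}(C^\bullet)\to\operatorname{Det}(H^\bullet(\partial))$: choose $C^j=B^j\oplus H^j\oplus A^j$ with $B^j\oplus H^j=\operatorname{Ker}\partial\cap C^j$, $B^j=\partial(A^{j-1})=\partial(C^{j-1})$, $A^{-1}=A^d=0$; for nonzero $c_j\in\operatorname{Det}(C^j)$, $a_j\in\operatorname{Det}(A^j)$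 ($a_{-1}=1$), $h_j\in\operatorname{Det}(H^j)\cong\operatorname{Det}(H^j(\partial))$ is unique with $c_j=\mu_{B^j,H^j,A^j}(\partial(a_{j-1})\otimes h_j\otimes a_j)$; $\phi_{C^\bullet}(c_0\otimes c_1^{-1}\otimes\cdots\otimes c_d^{(-1)^d})=(-1)^{\mathcal N}h_0\otimes h_1^{-1}\otimes\cdots\otimes h_d^{(-1)^d}$, $\mathcal N=\frac12\sum_j\dim A^j(\dim A^j+(-1)^{j+1})$; independent of choices. A chirality operator is an involution $\Gamma:C^\bullet\to C^\bullet$ with $\Gamma(C^j)=C^{d-j}$; $\Gamma c_j\in\operatorname{Det}(C^{d-j})$ denotes the image of $c_j\in\operatorname{Det}(C^j)$. For nonzero $c_j\in\operatorname{Det}(C^j)$, $j=0,\dots,r-1$, put $c_\Gamma=(-1)^{\mathcal R(C^\bullet)}c_0\otimes c_1^{-1}\otimes\cdots\otimes c_{r-1}^{(-1)^{r-1}}\otimes(\Gamma c_{r-1})^{(-1)^r}\otimes(\Gamma c_{r-2})^{(-1)^{r-1}}\otimes\cdots\otimes(\Gamma c_0)^{-1}\in\operatorname{Det}(C^\bullet)$, where $\mathcal R(C^\bullet)=\frac12\sum_{j=0}^{r-1}\dim C^j(\dim C^j+(-1)^{r+j})$; $c_\Gamma$ is independent of the $c_j$. The refined torsion is $\rho_\Gamma:=\phi_{C^\bullet}(c_\Gamma)\in\operatorname{Det}(H^\bullet(\partial))$. *)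

theory Defs
  imports Complex_Main "Jordan_Normal_Form.Determinant" "Jordan_Normal_Form.Conjugate"
begin

text \<open>The j-th cochain space C^j is k^(n j), i.e. carrier_vec (n j), for j = 0..d.
 The differential C^j -> C^(j+1) is the matrix D j (j < d); D d is the zero map.
 A list of vectors vs stands for the family of columns of mat_of_cols; linear
 combinations of vs are the vectors mat_of_cols m vs *v c.\<close>

text \<open>Exponent (-1)^j applied to an element of a field (or to a line coordinate).\<close>
definition sgnpow :: "nat \<Rightarrow> 'b::field \<Rightarrow> 'b" where
  "sgnpow j x = (if even j then x else inverse x)"

definition ker_sp :: "nat \<Rightarrow> (nat \<Rightarrow> nat) \<Rightarrow> (nat \<Rightarrow> 'a::field mat) \<Rightarrow> nat \<Rightarrow> 'a vec set" where
  "ker_sp d n D j = {v \<in> carrier_vec (n j). j < d \<longrightarrow> D j *\<^sub>v v = 0\<^sub>v (n (Suc j))}"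

definition img_sp :: "nat \<Rightarrow> (nat \<Rightarrow> nat) \<Rightarrow> (nat \<Rightarrow> 'a::field mat) \<Rightarrow> nat \<Rightarrow> 'a vec set" where
  "img_sp d n D j = (if j = 0 then {0\<^sub>v (n 0)} else (\<lambda>v. D (j - 1) *\<^sub>v v) ` carrier_vec (n (j - 1)))"

text \<open>qframe m K B bs: B \<subseteq> K \<subseteq> k^m subspaces; the classes of the vectors bs in K/B
 form a basis of the quotient K/B.\<close>
definition qframe :: "nat \<Rightarrow> 'a::field vec set \<Rightarrow> 'a vec set \<Rightarrow> 'a vec list \<Rightarrow> bool" where
  "qframe m K B bs \<longleftrightarrow> set bs \<subseteq> K \<and> set bs \<subseteq> carrier_vec m \<and>
     (\<forall>c \<in> carrier_vec (length bs). mat_of_cols m bs *\<^sub>v c \<in> B \<longrightarrow> c = 0\<^sub>v (length bs)) \<and>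
     (\<forall>v \<in> K. \<exists>c \<in> carrier_vec (length bs). v - mat_of_cols m bs *\<^sub>v c \<in> B)"

text \<open>A chosen basis alpha j of a complement A^j of Ker(\<partial>) \<inter> C^j in C^j
 (its classes form a basis of C^j / Ker). For j = d this is the empty list.\<close>
definition cfr :: "nat \<Rightarrow> (nat \<Rightarrow> nat) \<Rightarrow> (nat \<Rightarrow> 'a::field mat) \<Rightarrow> nat \<Rightarrow> 'a vec list" where
  "cfr d n D j = (SOME \<alpha>. qframe (n j) (carrier_vec (n j)) (ker_sp d n D j) \<alpha>)"

text \<open>The matrix whose columns are \<partial>(alpha (j-1)), bs, alpha j; its determinant is the
 coordinate of the fused wedge \<mu>(\<partial>a_{j-1} \<otimes> h_j \<otimes> a_j) w.r.t. e_1\<and>...\<and>e_{n j}.\<close>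
definition fuse_mat :: "nat \<Rightarrow> (nat \<Rightarrow> nat) \<Rightarrow> (nat \<Rightarrow> 'a::field mat) \<Rightarrow> nat \<Rightarrow> 'a vec list \<Rightarrow> 'a mat" where
  "fuse_mat d n D j bs = mat_of_cols (n j)
     ((if j = 0 then [] else map (\<lambda>v. D (j - 1) *\<^sub>v v) (cfr d n D (j - 1))) @ bs @ cfr d n D j)"

definition sgnN :: "nat \<Rightarrow> (nat \<Rightarrow> nat) \<Rightarrow> (nat \<Rightarrow> 'a::field mat) \<Rightarrow> nat" where
  "sgnN d n D = (\<Sum>j\<le>d. let a = length (cfr d n D j) in
      if even j then a * (a - 1) else a * (a + 1)) div 2"

text \<open>Representation of Det(H^\<bullet>(\<partial>)) = \<Otimes>_j Det(H^j(\<partial>))^((-1)^j), H^j(\<partial>) = Ker/Im: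
 an element \<omega> is represented by its coefficient function, which sends a tuple
 bss = [bs_0, ..., bs_d] of bases of the quotients H^j(\<partial>) to the scalar t with
 \<omega> = t \<cdot> (\<and>[bs_0]) \<otimes> (\<and>[bs_1])^(-1) \<otimes> ... ; on other arguments it is 0.
 Det(C^\<bullet>) is identified with k via the standard bases, i.e. x \<in> k stands for
 x \<cdot> (e\<and>)_0 \<otimes> ((e\<and>)_1)^(-1) \<otimes> ... .\<close>
definition hframes :: "nat \<Rightarrow> (nat \<Rightarrow> nat) \<Rightarrow> (nat \<Rightarrow> 'a::field mat) \<Rightarrow> 'a vec list list \<Rightarrow> bool" where
  "hframes d n D bss \<longleftrightarrow> length bss = Suc d \<and>
     (\<forall>j\<le>d. qframe (n j) (ker_sp d n D j) (img_sp d n D j) (bss ! j))"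

text \<open>The isomorphism \<phi>_{C^\<bullet>} : Det(C^\<bullet>) \<rightarrow> Det(H^\<bullet>(\<partial>)), computed with the choice
 H^j = span(bs_j), A^j = span(alpha j), a_j = \<and>(alpha j): then h_j = (c_j-coordinate / det M_j)\<cdot>\<and>bs_j.\<close>
definition phiC :: "nat \<Rightarrow> (nat \<Rightarrow> nat) \<Rightarrow> (nat \<Rightarrow> 'a::field mat) \<Rightarrow> 'a \<Rightarrow> 'a vec list list \<Rightarrow> 'a" where
  "phiC d n D x bss = (if hframes d n D bss then
      (-1) ^ sgnN d n D * x * (\<Prod>j\<le>d. sgnpow j (inverse (det (fuse_mat d n D j (bss ! j)))))
    else 0)"

definition scalar_product :: "nat \<Rightarrow> ('a::{conjugatable_field,real_normed_field} vec \<Rightarrow> 'a vec \<Rightarrow> 'a) \<Rightarrow> bool" where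
  "scalar_product m sp \<longleftrightarrow>
     (\<forall>u \<in> carrier_vec m. \<forall>v \<in> carrier_vec m. \<forall>w \<in> carrier_vec m. sp (u + v) w = sp u w + sp v w) \<and>
     (\<forall>a. \<forall>u \<in> carrier_vec m. \<forall>v \<in> carrier_vec m. sp (a \<cdot>\<^sub>v u) v = a * sp u v) \<and>
     (\<forall>u \<in> carrier_vec m. \<forall>v \<in> carrier_vec m. sp u v = conjugate (sp v u)) \<and>
     (\<forall>u \<in> carrier_vec m. u \<noteq> 0\<^sub>v m \<longrightarrow> (\<exists>t::real. t > 0 \<and> sp u u = of_real t))"

text \<open>Gram matrix of a list of vectors; the induced metric on Det(V) is
 |v_1 \<and> ... \<and> v_m| = sqrt(det Gram(v)).\<close>
definition gram :: "('a::{conjugatable_field,real_normed_field} vec \<Rightarrow> 'a vec \<Rightarrow> 'a) \<Rightarrow> 'a vec list \<Rightarrow> 'a mat" where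
  "gram sp vs = mat (length vs) (length vs) (\<lambda>(i, k). sp (vs ! i) (vs ! k))"

definition wedge_norm :: "('a::{conjugatable_field,real_normed_field} vec \<Rightarrow> 'a vec \<Rightarrow> 'a) \<Rightarrow> 'a vec list \<Rightarrow> real" where
  "wedge_norm sp vs = sqrt (norm (det (gram sp vs)))"

definition std_basis :: "nat \<Rightarrow> 'a::zero_neq_one vec list" where
  "std_basis m = map (\<lambda>i. unit_vec m i) [0..<m]"

text \<open>The metric on Det(C^\<bullet>) induced by the scalar products sp j (norm on duals:
 |l^(-1)| = 1/|l|; norms multiply on tensor products).\<close>
definition detC_norm :: "nat \<Rightarrow> (nat \<Rightarrow> nat) \<Rightarrow> (nat \<Rightarrow> 'a::{conjugatable_field,real_normed_field} vec \<Rightarrow> 'a vec \<Rightarrow> 'a) \<Rightarrow> 'a \<Rightarrow> real" where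
  "detC_norm d n sp x = norm x * (\<Prod>j\<le>d. sgnpow j (wedge_norm (sp j) (std_basis (n j))))"

definition detH_norm :: "nat \<Rightarrow> (nat \<Rightarrow> nat) \<Rightarrow> (nat \<Rightarrow> 'a::{conjugatable_field,real_normed_field} mat) \<Rightarrow> (nat \<Rightarrow> 'a vec \<Rightarrow> 'a vec \<Rightarrow> 'a) \<Rightarrow> ('a vec list list \<Rightarrow> 'a) \<Rightarrow> real" where
  "detH_norm d n D sp \<omega> = detC_norm d n sp (THE x. phiC d n D x = \<omega>)"

definition cochain_complex :: "nat \<Rightarrow> (nat \<Rightarrow> nat) \<Rightarrow> (nat \<Rightarrow> 'a::field mat) \<Rightarrow> bool" where
  "cochain_complex d n D \<longleftrightarrow> (\<forall>j<d. D j \<in> carrier_mat (n (Suc j)) (n j)) \<and>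
     (\<forall>j. Suc j < d \<longrightarrow> D (Suc j) * D j = 0\<^sub>m (n (Suc (Suc j))) (n j))"

definition chirality :: "nat \<Rightarrow> (nat \<Rightarrow> nat) \<Rightarrow> (nat \<Rightarrow> 'a::field mat) \<Rightarrow> bool" where
  "chirality d n Gam \<longleftrightarrow> (\<forall>j\<le>d. Gam j \<in> carrier_mat (n (d - j)) (n j) \<and>
     Gam (d - j) * Gam j = 1\<^sub>m (n j))"

definition sgnR :: "nat \<Rightarrow> (nat \<Rightarrow> nat) \<Rightarrow> nat" where
  "sgnR r n = (\<Sum>j<r. if even (r + j) then n j * (n j + 1) else n j * (n j - 1)) div 2"

text \<open>c_\<Gamma> \<in> Det(C^\<bullet>) \<cong> k built from c_j = g j \<cdot> e\<and> \<in> Det(C^j), j < r;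
 \<Gamma> c_j has coordinate g j * det (Gam j) in Det(C^(d-j)), and sits in position d - j.\<close>
definition c_Gamma :: "nat \<Rightarrow> nat \<Rightarrow> (nat \<Rightarrow> nat) \<Rightarrow> (nat \<Rightarrow> 'a::field mat) \<Rightarrow> (nat \<Rightarrow> 'a) \<Rightarrow> 'a" where
  "c_Gamma r d n Gam g = (-1) ^ sgnR r n *
     (\<Prod>j<r. sgnpow j (g j) * sgnpow (d - j) (g j * det (Gam j)))"

definition rho_Gamma :: "nat \<Rightarrow> nat \<Rightarrow> (nat \<Rightarrow> nat) \<Rightarrow> (nat \<Rightarrow> 'a::field mat) \<Rightarrow> (nat \<Rightarrow> 'a::field mat) \<Rightarrow> (nat \<Rightarrow> 'a) \<Rightarrow> 'a vec list list \<Rightarrow> 'a" where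
  "rho_Gamma r d n D Gam g = phiC d n D (c_Gamma r d n Gam g)"

definition lemma4p3_claim :: "'a::{conjugatable_field,real_normed_field} itself \<Rightarrow> bool" where
  "lemma4p3_claim _ \<longleftrightarrow>
    (\<forall>(r::nat) (d::nat) (n::nat \<Rightarrow> nat) (D::nat \<Rightarrow> 'a mat) (Gam::nat \<Rightarrow> 'a mat)
       (sp::nat \<Rightarrow> 'a vec \<Rightarrow> 'a vec \<Rightarrow> 'a) (g::nat \<Rightarrow> 'a).
      r \<ge> 1 \<longrightarrow> d = 2 * r - 1 \<longrightarrow>
      cochain_complex d n D \<longrightarrow>
      chirality d n Gam \<longrightarrow>
      (\<forall>j\<le>d. scalar_product (n j) (sp j)) \<longrightarrow>
      (\<forall>j\<le>d. \<forall>u \<in> carrier_vec (n j). \<forall>v \<in> carrier_vec (n (d - j)).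
          sp (d - j) (Gam j *\<^sub>v u) v = sp j u (Gam (d - j) *\<^sub>v v)) \<longrightarrow>
      (\<forall>j<r. g j \<noteq> 0) \<longrightarrow>
      detH_norm d n D sp (rho_Gamma r d n D Gam g) = 1)"

end

theory Submission
  imports Defs
begin

text \<open>The map \<phi> is injective: for every choice of homology frames bs_j the matrix with columns
  \<partial>a_(j-1), bs_j, a_j is invertible, because a basis of the image, a frame of Ker/Im and a frame
  of C^j/Ker concatenate to a basis of C^j. Hence the norm of \<rho>_\<Gamma> = \<phi>(c_\<Gamma>) is the norm of c_\<Gamma>
  in Det(C^\<bullet>), a product over the pairs of degrees (j, d - j). Since \<Gamma>_j is invertible,
  dim C^j = dim C^(d-j), and self-adjointness of \<Gamma> turns the Gram matrix of the standard basis
  of C^j into \<Gamma>_j^T Gram_(d-j) conj(\<Gamma>_j), so the two standard wedges differ in norm by the factor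
  |det \<Gamma>_j|. As d is odd, j and d - j have opposite parity: c_j and \<Gamma>c_j = det \<Gamma>_j c_j enter
  with opposite exponents, and each pair contributes 1.\<close>

lemma minus_vec_eq_zero_iff:
  fixes u w :: "'a::ab_group_add vec"
  assumes "u \<in> carrier_vec m" "w \<in> carrier_vec m"
  shows "u - w = 0\<^sub>v m \<longleftrightarrow> u = w"
proof
  assume h: "u - w = 0\<^sub>v m"
  show "u = w"
  proof (rule eq_vecI)
    fix i assume "i < dim_vec w"
    hence "i < m" using assms by simp
    thus "u $ i = w $ i" using arg_cong[OF h, of "\<lambda>x. x $ i"] assms by simp
  qed (use assms in simp)
qed (use assms in simp)

lemma mat_of_cols_append_mult_vec:
  assumes c1: "c1 \<in> carrier_vec (length xs)" and c2: "c2 \<in> carrier_vec (length ys)"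
  shows "mat_of_cols m (xs @ ys) *\<^sub>v (c1 @\<^sub>v c2) = mat_of_cols m xs *\<^sub>v c1 + mat_of_cols m ys *\<^sub>v c2"
proof (rule eq_vecI)
  fix i assume "i < dim_vec (mat_of_cols m xs *\<^sub>v c1 + mat_of_cols m ys *\<^sub>v c2)"
  hence i: "i < m" by simp
  have "row (mat_of_cols m (xs @ ys)) i = row (mat_of_cols m xs) i @\<^sub>v row (mat_of_cols m ys) i"
    by (rule eq_vecI) (auto simp: mat_of_cols_def i nth_append)
  thus "(mat_of_cols m (xs @ ys) *\<^sub>v (c1 @\<^sub>v c2)) $ i = (mat_of_cols m xs *\<^sub>v c1 + mat_of_cols m ys *\<^sub>v c2) $ i"
    using i c1 c2 by (simp add: scalar_prod_append[of _ "length xs" _ "length ys"])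
qed simp

lemma mat_of_cols_singleton_mult_vec:
  fixes v :: "'a::comm_ring_1 vec"
  assumes "v \<in> carrier_vec m" and "c \<in> carrier_vec 1"
  shows "mat_of_cols m [v] *\<^sub>v c = (c $ 0) \<cdot>\<^sub>v v"
  using assms by (intro eq_vecI) (auto simp: mat_of_cols_def scalar_prod_def)

lemma mat_of_cols_map_mult_vec:
  fixes A :: "'a::comm_ring_1 mat"
  assumes bs: "set bs \<subseteq> carrier_vec m1" and A: "A \<in> carrier_mat m2 m1" and c: "c \<in> carrier_vec (length bs)"
  shows "mat_of_cols m2 (map (\<lambda>v. A *\<^sub>v v) bs) *\<^sub>v c = A *\<^sub>v (mat_of_cols m1 bs *\<^sub>v c)"
proof -
  have "mat_of_cols m2 (map (\<lambda>v. A *\<^sub>v v) bs) = A * mat_of_cols m1 bs"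
    using bs A by (intro eq_matI) (auto simp: mat_of_cols_index col_mat_of_cols[of _ _ m1] nth_mem subsetD)
  thus ?thesis using A c by (simp add: assoc_mult_mat_vec[of A m2 m1 _ "length bs"])
qed

lemma carrier_vec_add_split:
  assumes "c \<in> carrier_vec (a + b)"
  obtains c1 c2 where "c1 \<in> carrier_vec a" "c2 \<in> carrier_vec b" "c = c1 @\<^sub>v c2"
  using vec_first_last_append[OF assms] vec_first_carrier vec_last_carrier by metis

lemma mat_mult_vec_inj_imp_le:
  fixes M :: "'a::field mat"
  assumes M: "M \<in> carrier_mat m L"
    and inj: "\<forall>c\<in>carrier_vec L. M *\<^sub>v c = 0\<^sub>v m \<longrightarrow> c = 0\<^sub>v L"
  shows "L \<le> m"
proof (rule ccontr)
  assume "\<not> L \<le> m" hence lt: "m < L" by simp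
  \<comment> \<open>pad M with zero rows to a square matrix, whose determinant vanishes\<close>
  define M' where "M' = mat L L (\<lambda>(i,k). if i < m then M $$ (i,k) else 0)"
  have M'c: "M' \<in> carrier_mat L L" unfolding M'_def by simp
  have rows: "M' = mat\<^sub>r L L (\<lambda>i. if i = m then 0\<^sub>v L else row M' i)"
    by (rule eq_matI) (auto simp: M'_def lt)
  have "det M' = 0"
    by (subst rows, rule det_row_0[OF lt]) (auto simp: M'_def)
  then obtain v where v: "v \<in> carrier_vec L" "v \<noteq> 0\<^sub>v L" "M' *\<^sub>v v = 0\<^sub>v L"
    using det_0_iff_vec_prod_zero_field[OF M'c] by blast
  have "M *\<^sub>v v = 0\<^sub>v m"
  proof (rule eq_vecI)
    fix i assume "i < dim_vec (0\<^sub>v m :: 'a vec)"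
    hence i: "i < m" by simp
    have "row M i = row M' i" using M i lt by (intro eq_vecI) (auto simp: M'_def)
    hence "(M *\<^sub>v v) $ i = (M' *\<^sub>v v) $ i" using M i lt M'c by simp
    thus "(M *\<^sub>v v) $ i = 0\<^sub>v m $ i" using v i lt by simp
  qed (use M in simp)
  with inj v show False by blast
qed

lemma mat_left_inverse_imp_inj:
  fixes A :: "'a::comm_ring_1 mat"
  assumes A: "A \<in> carrier_mat m k" and B: "B \<in> carrier_mat k m" and BA: "B * A = 1\<^sub>m k"
  shows "\<forall>c\<in>carrier_vec k. A *\<^sub>v c = 0\<^sub>v m \<longrightarrow> c = 0\<^sub>v k"
proof (intro ballI impI)
  fix c :: "'a vec" assume c: "c \<in> carrier_vec k" and Ac: "A *\<^sub>v c = 0\<^sub>v m"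
  have "c = (B * A) *\<^sub>v c" using BA c by simp
  also have "\<dots> = B *\<^sub>v (A *\<^sub>v c)" using A B c by simp
  also have "\<dots> = 0\<^sub>v k" unfolding Ac using B by auto
  finally show "c = 0\<^sub>v k" .
qed

lemma mat_left_inverse_imp_le:
  fixes A :: "'a::field mat"
  assumes "A \<in> carrier_mat m k" "B \<in> carrier_mat k m" "B * A = 1\<^sub>m k"
  shows "k \<le> m"
  using mat_mult_vec_inj_imp_le[OF assms(1) mat_left_inverse_imp_inj[OF assms]] .

lemma mat_bij_imp_det_nonzero:
  fixes M :: "'a::field mat"
  assumes M: "M \<in> carrier_mat m L"
    and inj: "\<forall>c\<in>carrier_vec L. M *\<^sub>v c = 0\<^sub>v m \<longrightarrow> c = 0\<^sub>v L"
    and surj: "\<forall>v\<in>carrier_vec m. \<exists>c\<in>carrier_vec L. M *\<^sub>v c = v"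
  shows "det M \<noteq> 0"
proof -
  obtain f where f: "\<And>v. v \<in> carrier_vec m \<Longrightarrow> f v \<in> carrier_vec L \<and> M *\<^sub>v f v = v"
    using surj by metis
  define N where "N = mat L m (\<lambda>(i,k). f (unit_vec m k) $ i)"
  have N: "N \<in> carrier_mat L m" unfolding N_def by simp
  have colN: "col N k = f (unit_vec m k)" if "k < m" for k
    using f[of "unit_vec m k"] that by (intro eq_vecI) (auto simp: N_def)
  have MN: "M * N = 1\<^sub>m m"
  proof (rule eq_matI)
    fix i k assume i: "i < dim_row (1\<^sub>m m :: 'a mat)" and k: "k < dim_col (1\<^sub>m m :: 'a mat)"
    have "(M * N) $$ (i,k) = (M *\<^sub>v f (unit_vec m k)) $ i" using i k M N by (simp add: colN)
    also have "\<dots> = (1\<^sub>m m :: 'a mat) $$ (i,k)" using f[of "unit_vec m k"] i k by simp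
    finally show "(M * N) $$ (i,k) = (1\<^sub>m m :: 'a mat) $$ (i,k)" .
  qed (use M N in auto)
  have Lm: "L = m"
    using mat_left_inverse_imp_le[OF N M MN] mat_mult_vec_inj_imp_le[OF M inj] by simp
  have "det M * det N = 1" using det_mult[of M m N] M N MN Lm by simp
  thus ?thesis by auto
qed

definition vec_subspace :: "nat \<Rightarrow> 'a::field vec set \<Rightarrow> bool" where
  "vec_subspace m S \<longleftrightarrow> S \<subseteq> carrier_vec m \<and> 0\<^sub>v m \<in> S \<and>
     (\<forall>u\<in>S. \<forall>v\<in>S. u + v \<in> S) \<and> (\<forall>a. \<forall>u\<in>S. a \<cdot>\<^sub>v u \<in> S)"

lemma vec_subspaceD:
  assumes "vec_subspace m S"
  shows "S \<subseteq> carrier_vec m" and "0\<^sub>v m \<in> S"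
  using assms unfolding vec_subspace_def by auto

lemma vec_subspace_carrier_vec: "vec_subspace m (carrier_vec m :: 'a::field vec set)"
  unfolding vec_subspace_def by auto

lemma vec_subspace_zero: "vec_subspace m {0\<^sub>v m :: 'a::field vec}"
  unfolding vec_subspace_def by auto

lemma vec_subspace_diff:
  assumes S: "vec_subspace m S" and u: "u \<in> S" and w: "w \<in> S"
  shows "u - w \<in> S"
proof -
  have "u \<in> carrier_vec m" "w \<in> carrier_vec m" using S u w unfolding vec_subspace_def by auto
  hence "u - w = u + (-1) \<cdot>\<^sub>v w" by (intro eq_vecI) auto
  thus ?thesis using S u w unfolding vec_subspace_def by metis
qed

lemma vec_subspace_mat_kernel:
  fixes A :: "'a::field mat"
  assumes A: "A \<in> carrier_mat m2 m1"
  shows "vec_subspace m1 {v \<in> carrier_vec m1. A *\<^sub>v v = 0\<^sub>v m2}"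
  using A unfolding vec_subspace_def
  by (auto simp: mult_add_distrib_mat_vec[OF A] mult_mat_vec[OF A])

lemma vec_subspace_mat_image:
  fixes A :: "'a::field mat"
  assumes A: "A \<in> carrier_mat m2 m1"
  shows "vec_subspace m2 ((\<lambda>v. A *\<^sub>v v) ` carrier_vec m1)"
  unfolding vec_subspace_def
proof (intro conjI ballI allI)
  show "(\<lambda>v. A *\<^sub>v v) ` carrier_vec m1 \<subseteq> carrier_vec m2" using A by auto
  show "0\<^sub>v m2 \<in> (\<lambda>v. A *\<^sub>v v) ` carrier_vec m1"
    using A by (intro image_eqI[of _ _ "0\<^sub>v m1"]) auto
next
  fix u w assume "u \<in> (\<lambda>v. A *\<^sub>v v) ` carrier_vec m1" "w \<in> (\<lambda>v. A *\<^sub>v v) ` carrier_vec m1"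
  then obtain x y where "x \<in> carrier_vec m1" "y \<in> carrier_vec m1" "u = A *\<^sub>v x" "w = A *\<^sub>v y"
    by blast
  thus "u + w \<in> (\<lambda>v. A *\<^sub>v v) ` carrier_vec m1"
    using A by (intro image_eqI[of _ _ "x + y"]) (auto simp: mult_add_distrib_mat_vec)
next
  fix a u assume "u \<in> (\<lambda>v. A *\<^sub>v v) ` carrier_vec m1"
  then obtain x where "x \<in> carrier_vec m1" "u = A *\<^sub>v x" by blast
  thus "a \<cdot>\<^sub>v u \<in> (\<lambda>v. A *\<^sub>v v) ` carrier_vec m1"
    using A by (intro image_eqI[of _ _ "a \<cdot>\<^sub>v x"]) (auto simp: mult_mat_vec)
qed

lemma mat_of_cols_mult_vec_in_subspace:
  assumes S: "vec_subspace m S" and bs: "set bs \<subseteq> S" and c: "c \<in> carrier_vec (length bs)"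
  shows "mat_of_cols m bs *\<^sub>v c \<in> S"
  using bs c
proof (induction bs arbitrary: c)
  case Nil
  hence "mat_of_cols m [] *\<^sub>v c = 0\<^sub>v m" by (intro eq_vecI) (auto simp: mat_of_cols_def scalar_prod_def)
  then show ?case using S unfolding vec_subspace_def by simp
next
  case (Cons b bs)
  obtain c1 c2 where c1: "c1 \<in> carrier_vec 1" and c2: "c2 \<in> carrier_vec (length bs)" and c: "c = c1 @\<^sub>v c2"
    using carrier_vec_add_split[of c 1 "length bs"] Cons.prems by auto
  have b: "b \<in> S" "b \<in> carrier_vec m" and bs: "set bs \<subseteq> S" using Cons.prems S unfolding vec_subspace_def by auto
  have "mat_of_cols m (b # bs) *\<^sub>v c = (c1 $ 0) \<cdot>\<^sub>v b + mat_of_cols m bs *\<^sub>v c2"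
    using mat_of_cols_append_mult_vec[of c1 "[b]" c2 bs m] mat_of_cols_singleton_mult_vec[OF b(2) c1] c1 c2 c
    by simp
  thus ?case using Cons.IH[OF bs c2] b S unfolding vec_subspace_def by simp
qed

definition indep_mod :: "nat \<Rightarrow> 'a::field vec set \<Rightarrow> 'a vec set \<Rightarrow> 'a vec list \<Rightarrow> bool" where
  "indep_mod m K B bs \<longleftrightarrow> set bs \<subseteq> K \<and> set bs \<subseteq> carrier_vec m \<and>
     (\<forall>c \<in> carrier_vec (length bs). mat_of_cols m bs *\<^sub>v c \<in> B \<longrightarrow> c = 0\<^sub>v (length bs))"

lemma qframe_iff_indep_mod:
  "qframe m K B bs \<longleftrightarrow> indep_mod m K B bs \<and>
     (\<forall>v \<in> K. \<exists>c \<in> carrier_vec (length bs). v - mat_of_cols m bs *\<^sub>v c \<in> B)"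
  unfolding qframe_def indep_mod_def by blast

lemma indep_mod_length_le:
  assumes "indep_mod m K B bs" and "0\<^sub>v m \<in> B"
  shows "length bs \<le> m"
  using assms by (intro mat_mult_vec_inj_imp_le[of "mat_of_cols m bs"]) (auto simp: indep_mod_def)

lemma indep_mod_snoc:
  assumes B: "vec_subspace m B" and bs: "indep_mod m K B bs" and v: "v \<in> K" "v \<in> carrier_vec m"
    and not_spanned: "\<forall>c \<in> carrier_vec (length bs). v - mat_of_cols m bs *\<^sub>v c \<notin> B"
  shows "indep_mod m K B (bs @ [v])"
  unfolding indep_mod_def
proof (intro conjI ballI impI)
  show "set (bs @ [v]) \<subseteq> K" "set (bs @ [v]) \<subseteq> carrier_vec m" using bs v unfolding indep_mod_def by auto
  fix c assume "c \<in> carrier_vec (length (bs @ [v]))" and inB: "mat_of_cols m (bs @ [v]) *\<^sub>v c \<in> B"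
  then obtain c1 c2 where c1: "c1 \<in> carrier_vec (length bs)" and c2: "c2 \<in> carrier_vec 1" and c: "c = c1 @\<^sub>v c2"
    using carrier_vec_add_split[of c "length bs" 1] by auto
  define a where "a = c2 $ 0"
  define w where "w = mat_of_cols m bs *\<^sub>v c1"
  have w: "w \<in> carrier_vec m" unfolding w_def by (simp add: carrier_vecI)
  have comb: "mat_of_cols m (bs @ [v]) *\<^sub>v c = w + a \<cdot>\<^sub>v v"
    using mat_of_cols_append_mult_vec[of c1 bs c2 "[v]"] mat_of_cols_singleton_mult_vec[OF v(2) c2] c1 c2
    unfolding c w_def a_def by simp
  have "a = 0"
  proof (rule ccontr)
    assume "a \<noteq> 0"
    have "v - mat_of_cols m bs *\<^sub>v ((- inverse a) \<cdot>\<^sub>v c1) = inverse a \<cdot>\<^sub>v (w + a \<cdot>\<^sub>v v)"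
      using \<open>a \<noteq> 0\<close> v w c1 unfolding w_def[symmetric] mult_mat_vec[OF mat_of_cols_carrier(1) c1]
      by (intro eq_vecI) (auto simp: field_simps)
    also have "\<dots> \<in> B" using inB comb B unfolding vec_subspace_def by simp
    finally show False using not_spanned c1 by simp
  qed
  moreover have "w + 0 \<cdot>\<^sub>v v = w" using w v by (intro eq_vecI) auto
  ultimately have "w \<in> B" using inB comb by simp
  hence "c1 = 0\<^sub>v (length bs)" using bs c1 unfolding indep_mod_def w_def by blast
  moreover have "c2 = 0\<^sub>v 1" using c2 \<open>a = 0\<close> unfolding a_def by (intro eq_vecI) auto
  ultimately show "c = 0\<^sub>v (length (bs @ [v]))" unfolding c by (intro eq_vecI) auto
qed

lemma qframe_exists:
  assumes B: "vec_subspace m B" and K: "K \<subseteq> carrier_vec m"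
  shows "\<exists>bs. qframe m K B bs"
proof -
  have "indep_mod m K B []" unfolding indep_mod_def by auto
  moreover have "\<forall>bs. indep_mod m K B bs \<longrightarrow> length bs < Suc m"
    using indep_mod_length_le B unfolding vec_subspace_def by (metis less_Suc_eq_le)
  ultimately obtain bs where bs: "indep_mod m K B bs"
    and maximal: "\<And>bs'. indep_mod m K B bs' \<Longrightarrow> length bs' \<le> length bs"
    using ex_has_greatest_nat[of "indep_mod m K B" "[]" length "Suc m"] by metis
  have "\<exists>c \<in> carrier_vec (length bs). v - mat_of_cols m bs *\<^sub>v c \<in> B" if v: "v \<in> K" for v
  proof (rule ccontr)
    assume "\<not> ?thesis"
    hence "indep_mod m K B (bs @ [v])" using indep_mod_snoc[OF B bs v] v K by blast
    with maximal show False by fastforce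
  qed
  with bs show ?thesis unfolding qframe_iff_indep_mod by blast
qed

lemma indep_mod_append:
  assumes B: "vec_subspace m B" and CB: "C \<subseteq> B" and BK: "B \<subseteq> K"
    and ps: "qframe m B C ps" and bs: "qframe m K B bs"
  shows "indep_mod m K C (ps @ bs)"
  unfolding indep_mod_def
proof (intro conjI ballI impI)
  have ps_B: "set ps \<subseteq> B" using ps unfolding qframe_def by blast
  show "set (ps @ bs) \<subseteq> K" "set (ps @ bs) \<subseteq> carrier_vec m" using ps bs BK unfolding qframe_def by auto
  fix c assume c: "c \<in> carrier_vec (length (ps @ bs))" and inC: "mat_of_cols m (ps @ bs) *\<^sub>v c \<in> C"
  obtain c1 c2 where c1: "c1 \<in> carrier_vec (length ps)" and c2: "c2 \<in> carrier_vec (length bs)"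
    and c12: "c = c1 @\<^sub>v c2" using carrier_vec_add_split[of c "length ps" "length bs"] c by auto
  define x where "x = mat_of_cols m ps *\<^sub>v c1"
  define y where "y = mat_of_cols m bs *\<^sub>v c2"
  have x: "x \<in> B" unfolding x_def by (rule mat_of_cols_mult_vec_in_subspace[OF B ps_B c1])
  hence x_carrier: "x \<in> carrier_vec m" using vec_subspaceD(1)[OF B] by blast
  have xy: "x + y \<in> C" using inC mat_of_cols_append_mult_vec[OF c1 c2] unfolding c12 x_def y_def by simp
  have "y = (x + y) - x" using x_carrier unfolding y_def by (intro eq_vecI) auto
  also have "\<dots> \<in> B" using vec_subspace_diff[OF B _ x] xy CB by blast
  finally have c2_0: "c2 = 0\<^sub>v (length bs)" using bs c2 unfolding qframe_def y_def by blast
  have "x + y = x" using x_carrier unfolding y_def c2_0 by (intro eq_vecI) auto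
  hence "c1 = 0\<^sub>v (length ps)" using xy ps c1 unfolding qframe_def x_def by auto
  with c2_0 show "c = 0\<^sub>v (length (ps @ bs))" unfolding c12 by (intro eq_vecI) auto
qed

lemma qframe_append:
  assumes B: "vec_subspace m B" and CB: "C \<subseteq> B" and BK: "B \<subseteq> K" and K: "K \<subseteq> carrier_vec m"
    and ps: "qframe m B C ps" and bs: "qframe m K B bs"
  shows "qframe m K C (ps @ bs)"
  unfolding qframe_iff_indep_mod
proof (intro conjI ballI)
  show "indep_mod m K C (ps @ bs)" by (rule indep_mod_append[OF B CB BK ps bs])
  fix v assume v: "v \<in> K"
  obtain c2 where c2: "c2 \<in> carrier_vec (length bs)" and "v - mat_of_cols m bs *\<^sub>v c2 \<in> B"
    using bs v unfolding qframe_def by blast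
  then obtain c1 where c1: "c1 \<in> carrier_vec (length ps)"
    and inC: "(v - mat_of_cols m bs *\<^sub>v c2) - mat_of_cols m ps *\<^sub>v c1 \<in> C"
    using ps unfolding qframe_def by blast
  have "v - mat_of_cols m (ps @ bs) *\<^sub>v (c1 @\<^sub>v c2) = (v - mat_of_cols m bs *\<^sub>v c2) - mat_of_cols m ps *\<^sub>v c1"
    unfolding mat_of_cols_append_mult_vec[OF c1 c2] using K v by (intro eq_vecI) auto
  thus "\<exists>c \<in> carrier_vec (length (ps @ bs)). v - mat_of_cols m (ps @ bs) *\<^sub>v c \<in> C"
    using inC c1 c2 by (intro bexI[of _ "c1 @\<^sub>v c2"]) auto
qed

lemma det_mat_of_cols_nonzero_if_qframe:
  fixes vs :: "'a::field vec list"
  assumes basis: "qframe m (carrier_vec m) {0\<^sub>v m} vs"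
  shows "det (mat_of_cols m vs) \<noteq> 0"
proof (rule mat_bij_imp_det_nonzero)
  show "\<forall>c\<in>carrier_vec (length vs). mat_of_cols m vs *\<^sub>v c = 0\<^sub>v m \<longrightarrow> c = 0\<^sub>v (length vs)"
    using basis unfolding qframe_def by simp
  show "\<forall>v\<in>carrier_vec m. \<exists>c\<in>carrier_vec (length vs). mat_of_cols m vs *\<^sub>v c = v"
  proof
    fix v :: "'a vec" assume v: "v \<in> carrier_vec m"
    then obtain c where c: "c \<in> carrier_vec (length vs)" and "v - mat_of_cols m vs *\<^sub>v c = 0\<^sub>v m"
      using basis unfolding qframe_def by blast
    moreover have "mat_of_cols m vs *\<^sub>v c \<in> carrier_vec m"
      using mult_mat_vec_carrier[OF mat_of_cols_carrier(1) c] .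
    ultimately have "mat_of_cols m vs *\<^sub>v c = v" using minus_vec_eq_zero_iff[OF v] by metis
    with c show "\<exists>c\<in>carrier_vec (length vs). mat_of_cols m vs *\<^sub>v c = v" by blast
  qed
qed simp

lemma qframe_zero_Nil: "qframe m {0\<^sub>v m} {0\<^sub>v m} ([] :: 'a::field vec list)"
proof -
  have "mat_of_cols m [] *\<^sub>v c = 0\<^sub>v m" if "c \<in> carrier_vec 0" for c :: "'a vec"
    using that by (intro eq_vecI) (auto simp: mat_of_cols_def scalar_prod_def)
  thus ?thesis unfolding qframe_def by (auto intro!: exI[of _ "0\<^sub>v 0"])
qed

lemma qframe_map_mat_image:
  fixes A :: "'a::field mat"
  assumes A: "A \<in> carrier_mat m2 m1"
    and as: "qframe m1 (carrier_vec m1) {v \<in> carrier_vec m1. A *\<^sub>v v = 0\<^sub>v m2} as"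
  shows "qframe m2 ((\<lambda>v. A *\<^sub>v v) ` carrier_vec m1) {0\<^sub>v m2} (map (\<lambda>v. A *\<^sub>v v) as)"
proof -
  have as_carrier: "set as \<subseteq> carrier_vec m1" using as unfolding qframe_def by blast
  have map: "mat_of_cols m2 (map (\<lambda>v. A *\<^sub>v v) as) *\<^sub>v c = A *\<^sub>v (mat_of_cols m1 as *\<^sub>v c)"
    if "c \<in> carrier_vec (length as)" for c
    by (rule mat_of_cols_map_mult_vec[OF as_carrier A that])
  have "c = 0\<^sub>v (length as)"
    if c: "c \<in> carrier_vec (length as)" and "mat_of_cols m2 (map (\<lambda>v. A *\<^sub>v v) as) *\<^sub>v c \<in> {0\<^sub>v m2}" for c
  proof -
    have "mat_of_cols m1 as *\<^sub>v c \<in> {v \<in> carrier_vec m1. A *\<^sub>v v = 0\<^sub>v m2}"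
      using that(2) map[OF c] mult_mat_vec_carrier[OF mat_of_cols_carrier(1) c] by simp
    thus ?thesis using as c unfolding qframe_def by blast
  qed
  moreover have "\<exists>c \<in> carrier_vec (length as). u - mat_of_cols m2 (map (\<lambda>v. A *\<^sub>v v) as) *\<^sub>v c \<in> {0\<^sub>v m2}"
    if u_image: "u \<in> (\<lambda>v. A *\<^sub>v v) ` carrier_vec m1" for u
  proof -
    obtain w where w: "w \<in> carrier_vec m1" and u: "u = A *\<^sub>v w" using u_image by blast
    then obtain c where c: "c \<in> carrier_vec (length as)"
      and "A *\<^sub>v (w - mat_of_cols m1 as *\<^sub>v c) = 0\<^sub>v m2" using as unfolding qframe_def by blast
    hence "u - mat_of_cols m2 (map (\<lambda>v. A *\<^sub>v v) as) *\<^sub>v c = 0\<^sub>v m2"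
      unfolding u map[OF c] using A w mult_mat_vec_carrier[OF mat_of_cols_carrier(1) c]
      by (simp add: mult_minus_distrib_mat_vec)
    with c show ?thesis by blast
  qed
  moreover have "set (map (\<lambda>v. A *\<^sub>v v) as) \<subseteq> (\<lambda>v. A *\<^sub>v v) ` carrier_vec m1"
    and "set (map (\<lambda>v. A *\<^sub>v v) as) \<subseteq> carrier_vec m2" using as_carrier A by auto
  ultimately show ?thesis unfolding qframe_def length_map by blast
qed

context
  fixes d :: nat and n :: "nat \<Rightarrow> nat" and D :: "nat \<Rightarrow> 'a::field mat"
  assumes complex: "cochain_complex d n D"
begin

lemma differential_carrier: "j < d \<Longrightarrow> D j \<in> carrier_mat (n (Suc j)) (n j)"
  using complex unfolding cochain_complex_def by blast

lemma ker_sp_eq_mat_kernel: "j < d \<Longrightarrow> ker_sp d n D j = {v \<in> carrier_vec (n j). D j *\<^sub>v v = 0\<^sub>v (n (Suc j))}"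
  unfolding ker_sp_def by auto

lemma vec_subspace_ker_sp: "vec_subspace (n j) (ker_sp d n D j)"
proof (cases "j < d")
  case True
  show ?thesis
    unfolding ker_sp_eq_mat_kernel[OF True] by (rule vec_subspace_mat_kernel[OF differential_carrier[OF True]])
next
  case False
  hence "ker_sp d n D j = carrier_vec (n j)" unfolding ker_sp_def by auto
  thus ?thesis using vec_subspace_carrier_vec by metis
qed

lemma vec_subspace_img_sp:
  assumes "j \<le> d"
  shows "vec_subspace (n j) (img_sp d n D j)"
proof (cases "j = 0")
  case True
  thus ?thesis unfolding img_sp_def using vec_subspace_zero by simp
next
  case False
  hence j1: "j - 1 < d" and Sj: "Suc (j - 1) = j" using assms by auto
  show ?thesis
    using vec_subspace_mat_image[OF differential_carrier[OF j1]] False unfolding img_sp_def Sj by simp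
qed

lemma img_sp_subset_ker_sp:
  assumes "j \<le> d"
  shows "img_sp d n D j \<subseteq> ker_sp d n D j"
proof
  fix v assume v: "v \<in> img_sp d n D j"
  have v_carrier: "v \<in> carrier_vec (n j)" using v vec_subspaceD(1)[OF vec_subspace_img_sp[OF assms]] by blast
  have "D j *\<^sub>v v = 0\<^sub>v (n (Suc j))" if "j < d"
  proof (cases "j = 0")
    case True
    thus ?thesis using v differential_carrier[OF that] unfolding img_sp_def by auto
  next
    case False
    then obtain x where x: "x \<in> carrier_vec (n (j - 1))" and vx: "v = D (j - 1) *\<^sub>v x"
      using v unfolding img_sp_def by auto
    have Dj: "D j \<in> carrier_mat (n (Suc j)) (n j)" using differential_carrier[OF that] .
    have Dj1: "D (j - 1) \<in> carrier_mat (n j) (n (j - 1))" using differential_carrier[of "j - 1"] False that by simp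
    have "Suc (j - 1) < d" and Sj: "Suc (j - 1) = j" using False that by auto
    hence "D (Suc (j - 1)) * D (j - 1) = 0\<^sub>m (n (Suc (Suc (j - 1)))) (n (j - 1))"
      using complex unfolding cochain_complex_def by blast
    hence "D j * D (j - 1) = 0\<^sub>m (n (Suc j)) (n (j - 1))" unfolding Sj .
    hence "D j *\<^sub>v (D (j - 1) *\<^sub>v x) = 0\<^sub>v (n (Suc j))"
      using Dj Dj1 x by (auto simp: assoc_mult_mat_vec[symmetric])
    thus ?thesis unfolding vx .
  qed
  thus "v \<in> ker_sp d n D j" using v_carrier unfolding ker_sp_def by simp
qed

lemma qframe_cfr: "qframe (n j) (carrier_vec (n j)) (ker_sp d n D j) (cfr d n D j)"
  unfolding cfr_def by (rule someI_ex, rule qframe_exists[OF vec_subspace_ker_sp]) simp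

lemma qframe_img_sp:
  assumes "j \<le> d"
  shows "qframe (n j) (img_sp d n D j) {0\<^sub>v (n j)}
    (if j = 0 then [] else map (\<lambda>v. D (j - 1) *\<^sub>v v) (cfr d n D (j - 1)))"
proof (cases "j = 0")
  case True
  thus ?thesis using qframe_zero_Nil unfolding img_sp_def by simp
next
  case False
  have j1: "j - 1 < d" and Sj: "Suc (j - 1) = j" using assms False by auto
  have "qframe (n j) ((\<lambda>v. D (j - 1) *\<^sub>v v) ` carrier_vec (n (j - 1))) {0\<^sub>v (n j)}
      (map (\<lambda>v. D (j - 1) *\<^sub>v v) (cfr d n D (j - 1)))"
    using qframe_map_mat_image[OF differential_carrier[OF j1]] qframe_cfr[of "j - 1"]
    unfolding ker_sp_eq_mat_kernel[OF j1] Sj by blast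
  thus ?thesis using False unfolding img_sp_def by simp
qed

lemma det_fuse_mat_nonzero:
  assumes j: "j \<le> d" and bs: "qframe (n j) (ker_sp d n D j) (img_sp d n D j) bs"
  shows "det (fuse_mat d n D j bs) \<noteq> 0"
proof -
  have K: "vec_subspace (n j) (ker_sp d n D j)" and I: "vec_subspace (n j) (img_sp d n D j)"
    using vec_subspace_ker_sp vec_subspace_img_sp[OF j] .
  have K_carrier: "ker_sp d n D j \<subseteq> carrier_vec (n j)" and zero_I: "{0\<^sub>v (n j)} \<subseteq> img_sp d n D j"
    and zero_K: "{0\<^sub>v (n j)} \<subseteq> ker_sp d n D j"
    using vec_subspaceD[OF K] vec_subspaceD[OF I] by auto
  have "qframe (n j) (ker_sp d n D j) {0\<^sub>v (n j)}
      ((if j = 0 then [] else map (\<lambda>v. D (j - 1) *\<^sub>v v) (cfr d n D (j - 1))) @ bs)"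
    by (rule qframe_append[OF I zero_I img_sp_subset_ker_sp[OF j] K_carrier qframe_img_sp[OF j] bs])
  hence "qframe (n j) (carrier_vec (n j)) {0\<^sub>v (n j)}
      (((if j = 0 then [] else map (\<lambda>v. D (j - 1) *\<^sub>v v) (cfr d n D (j - 1))) @ bs) @ cfr d n D j)"
    by (rule qframe_append[OF K zero_K K_carrier subset_refl _ qframe_cfr])
  thus ?thesis unfolding fuse_mat_def append_assoc by (rule det_mat_of_cols_nonzero_if_qframe)
qed

lemma hframes_exist: "\<exists>bss. hframes d n D bss"
proof -
  define bss where "bss = map (\<lambda>j. SOME bs. qframe (n j) (ker_sp d n D j) (img_sp d n D j) bs) [0..<Suc d]"
  have "qframe (n j) (ker_sp d n D j) (img_sp d n D j) (bss ! j)" if j: "j \<le> d" for j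
  proof -
    have "\<exists>bs. qframe (n j) (ker_sp d n D j) (img_sp d n D j) bs"
      using qframe_exists[OF vec_subspace_img_sp[OF j] vec_subspaceD(1)[OF vec_subspace_ker_sp]] .
    thus ?thesis unfolding bss_def using j by (simp del: upt_Suc) (rule someI_ex)
  qed
  thus ?thesis unfolding hframes_def by (intro exI[of _ bss]) (simp add: bss_def)
qed

lemma phiC_inj: "inj (\<lambda>x. phiC d n D x)"
proof (rule injI)
  fix x y assume eq: "phiC d n D x = phiC d n D y"
  obtain bss where bss: "hframes d n D bss" using hframes_exist by blast
  have "sgnpow j (inverse (det (fuse_mat d n D j (bss ! j)))) \<noteq> 0" if "j \<le> d" for j
    using det_fuse_mat_nonzero[OF that] bss that unfolding hframes_def sgnpow_def by simp
  moreover have "(-1) ^ sgnN d n D * x * (\<Prod>j\<le>d. sgnpow j (inverse (det (fuse_mat d n D j (bss ! j))))) =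
      (-1) ^ sgnN d n D * y * (\<Prod>j\<le>d. sgnpow j (inverse (det (fuse_mat d n D j (bss ! j)))))"
    using fun_cong[OF eq, of bss] bss unfolding phiC_def by simp
  ultimately show "x = y" by simp
qed

end

lemma detH_norm_phiC:
  fixes D :: "nat \<Rightarrow> 'a::{conjugatable_field,real_normed_field} mat"
  assumes "cochain_complex d n D"
  shows "detH_norm d n D sp (phiC d n D x) = detC_norm d n sp x"
proof -
  have "(THE y. phiC d n D y = phiC d n D x) = x"
    by (rule the_equality) (auto dest: injD[OF phiC_inj[OF assms]])
  thus ?thesis unfolding detH_norm_def by simp
qed

lemma conjugate_one: "conjugate (1::'a::conjugatable_field) = 1"
proof -
  have "conjugate (1::'a) * conjugate 1 = conjugate 1" using conjugate_dist_mul[of "1::'a" 1] by simp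
  thus ?thesis by (metis conjugate_zero_iff mult_cancel_left2 zero_neq_one)
qed

lemma comm_ring_hom_conjugate: "comm_ring_hom (conjugate :: 'a::conjugatable_field \<Rightarrow> 'a)"
  by unfold_locales (auto simp: conjugate_one conjugate_dist_mul conjugate_dist_add)

lemma det_map_mat_conjugate:
  fixes A :: "'a::conjugatable_field mat"
  shows "det (map_mat conjugate A) = conjugate (det A)"
  using comm_ring_hom.hom_det[OF comm_ring_hom_conjugate] .

context
  fixes m :: nat and sp :: "'a::{conjugatable_field,real_normed_field} vec \<Rightarrow> 'a vec \<Rightarrow> 'a"
  assumes sp: "scalar_product m sp"
begin

lemma scalar_product_add_left:
  "u \<in> carrier_vec m \<Longrightarrow> v \<in> carrier_vec m \<Longrightarrow> w \<in> carrier_vec m \<Longrightarrow> sp (u + v) w = sp u w + sp v w"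
  using sp unfolding scalar_product_def by blast

lemma scalar_product_smult_left:
  "u \<in> carrier_vec m \<Longrightarrow> v \<in> carrier_vec m \<Longrightarrow> sp (a \<cdot>\<^sub>v u) v = a * sp u v"
  using sp unfolding scalar_product_def by blast

lemma scalar_product_conjugate_sym:
  "u \<in> carrier_vec m \<Longrightarrow> v \<in> carrier_vec m \<Longrightarrow> sp u v = conjugate (sp v u)"
  using sp unfolding scalar_product_def by blast

lemma scalar_product_self_nonzero:
  assumes "u \<in> carrier_vec m" "u \<noteq> 0\<^sub>v m"
  shows "sp u u \<noteq> 0"
  using sp assms unfolding scalar_product_def by fastforce

lemma scalar_product_expand_left:
  assumes u: "u \<in> carrier_vec m" and w: "w \<in> carrier_vec m"
  shows "sp u w = (\<Sum>p<m. u $ p * sp (unit_vec m p) w)"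
proof -
  define trunc where "trunc k = vec m (\<lambda>i. if i < k then u $ i else 0)" for k
  have trunc_carrier: "trunc k \<in> carrier_vec m" for k unfolding trunc_def by simp
  have "sp (trunc k) w = (\<Sum>p<k. u $ p * sp (unit_vec m p) w)" if "k \<le> m" for k
    using that
  proof (induction k)
    case 0
    have "trunc 0 = 0 \<cdot>\<^sub>v u" unfolding trunc_def using u by (intro eq_vecI) auto
    thus ?case using scalar_product_smult_left[OF u w] by simp
  next
    case (Suc k)
    have "trunc (Suc k) = trunc k + u $ k \<cdot>\<^sub>v unit_vec m k"
      unfolding trunc_def using u Suc.prems by (intro eq_vecI) (auto simp: less_Suc_eq)
    hence "sp (trunc (Suc k)) w = sp (trunc k) w + u $ k * sp (unit_vec m k) w"
      using scalar_product_add_left[OF trunc_carrier _ w, of "u $ k \<cdot>\<^sub>v unit_vec m k" k]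
        scalar_product_smult_left[OF _ w, of "unit_vec m k" "u $ k"] by simp
    thus ?case using Suc by simp
  qed
  moreover have "trunc m = u" unfolding trunc_def using u by (intro eq_vecI) auto
  ultimately show ?thesis by (metis order_refl)
qed

lemma scalar_product_expand:
  assumes u: "u \<in> carrier_vec m" and w: "w \<in> carrier_vec m"
  shows "sp u w = (\<Sum>p<m. \<Sum>q<m. u $ p * conjugate (w $ q) * sp (unit_vec m p) (unit_vec m q))"
proof -
  have right: "sp (unit_vec m p) w = (\<Sum>q<m. conjugate (w $ q) * sp (unit_vec m p) (unit_vec m q))"
    if "p < m" for p
  proof -
    have "sp (unit_vec m p) w = conjugate (\<Sum>q<m. w $ q * sp (unit_vec m q) (unit_vec m p))"
      using scalar_product_conjugate_sym[OF _ w] scalar_product_expand_left[OF w, of "unit_vec m p"] by simp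
    also have "\<dots> = (\<Sum>q<m. conjugate (w $ q) * conjugate (sp (unit_vec m q) (unit_vec m p)))"
      by (simp add: sum_conjugate conjugate_dist_mul)
    also have "\<dots> = (\<Sum>q<m. conjugate (w $ q) * sp (unit_vec m p) (unit_vec m q))"
      by (intro sum.cong refl) (metis scalar_product_conjugate_sym unit_vec_carrier)
    finally show ?thesis .
  qed
  have "sp u w = (\<Sum>p<m. u $ p * (\<Sum>q<m. conjugate (w $ q) * sp (unit_vec m p) (unit_vec m q)))"
    unfolding scalar_product_expand_left[OF u w] by (intro sum.cong refl) (simp add: right)
  thus ?thesis by (simp add: sum_distrib_left mult.assoc)
qed

lemma gram_std_basis: "gram sp (std_basis m) = mat m m (\<lambda>(i, k). sp (unit_vec m i) (unit_vec m k))"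
  unfolding gram_def std_basis_def by (intro eq_matI) auto

lemma det_gram_std_basis_nonzero: "det (gram sp (std_basis m)) \<noteq> 0"
proof
  let ?G = "gram sp (std_basis m)"
  have G: "?G \<in> carrier_mat m m" unfolding gram_std_basis by simp
  assume "det ?G = 0"
  then obtain v where v: "v \<in> carrier_vec m" "v \<noteq> 0\<^sub>v m" "?G *\<^sub>v v = 0\<^sub>v m"
    using det_0_iff_vec_prod_zero_field[OF G] by blast
  have Gv: "(\<Sum>q<m. sp (unit_vec m p) (unit_vec m q) * v $ q) = 0" if "p < m" for p
    using arg_cong[OF v(3), of "\<lambda>x. x $ p"] that v(1)
    unfolding gram_std_basis by (simp add: scalar_prod_def lessThan_atLeast0)
  \<comment> \<open>the quadratic form vanishes on the conjugate of a kernel vector of the Gram matrix\<close>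
  have "sp (conjugate v) (conjugate v) =
      (\<Sum>p<m. conjugate v $ p * (\<Sum>q<m. sp (unit_vec m p) (unit_vec m q) * v $ q))"
    using v(1) unfolding scalar_product_expand[OF carrier_vec_conjugate carrier_vec_conjugate, OF v(1) v(1)]
    by (simp add: sum_distrib_left mult.commute mult.left_commute)
  also have "\<dots> = 0" using Gv by simp
  finally show False using scalar_product_self_nonzero v by simp
qed

lemma wedge_norm_std_basis_pos: "wedge_norm sp (std_basis m) > 0"
  using det_gram_std_basis_nonzero unfolding wedge_norm_def by simp

end

lemma gram_std_basis_adjoint:
  fixes sp1 sp2 :: "'a::{conjugatable_field,real_normed_field} vec \<Rightarrow> 'a vec \<Rightarrow> 'a"
  assumes sp2: "scalar_product m sp2"
    and G: "G \<in> carrier_mat m m" and G': "G' \<in> carrier_mat m m" and inv: "G' * G = 1\<^sub>m m"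
    and adjoint: "\<forall>u\<in>carrier_vec m. \<forall>v\<in>carrier_vec m. sp2 (G *\<^sub>v u) v = sp1 u (G' *\<^sub>v v)"
  shows "gram sp1 (std_basis m) = transpose_mat G * gram sp2 (std_basis m) * map_mat conjugate G"
proof (rule eq_matI)
  let ?G2 = "gram sp2 (std_basis m)"
  fix i k assume "i < dim_row (transpose_mat G * ?G2 * map_mat conjugate G)"
    and "k < dim_col (transpose_mat G * ?G2 * map_mat conjugate G)"
  hence i: "i < m" and k: "k < m" using G by auto
  have "G' *\<^sub>v (G *\<^sub>v unit_vec m k) = unit_vec m k"
    using G G' inv by (simp flip: assoc_mult_mat_vec)
  hence "gram sp1 (std_basis m) $$ (i, k) = sp1 (unit_vec m i) (G' *\<^sub>v (G *\<^sub>v unit_vec m k))"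
    unfolding gram_def std_basis_def using i k by simp
  also have "\<dots> = sp2 (G *\<^sub>v unit_vec m i) (G *\<^sub>v unit_vec m k)"
    using adjoint G by simp
  also have "\<dots> = (\<Sum>p<m. \<Sum>q<m. (G *\<^sub>v unit_vec m i) $ p * conjugate ((G *\<^sub>v unit_vec m k) $ q) *
      sp2 (unit_vec m p) (unit_vec m q))"
    by (rule scalar_product_expand[OF sp2]) (use G in simp_all)
  also have "\<dots> = (\<Sum>p<m. \<Sum>q<m. G $$ (p, i) * conjugate (G $$ (q, k)) * ?G2 $$ (p, q))"
    using G i k unfolding gram_std_basis[OF sp2] by (intro sum.cong refl) simp
  also have "\<dots> = (\<Sum>q<m. (\<Sum>p<m. G $$ (p, i) * ?G2 $$ (p, q)) * conjugate (G $$ (q, k)))"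
    by (subst sum.swap) (simp add: sum_distrib_left sum_distrib_right mult_ac)
  also have "\<dots> = (transpose_mat G * ?G2 * map_mat conjugate G) $$ (i, k)"
    using G i k unfolding gram_std_basis[OF sp2] by (simp add: scalar_prod_def lessThan_atLeast0)
  finally show "gram sp1 (std_basis m) $$ (i, k) = (transpose_mat G * ?G2 * map_mat conjugate G) $$ (i, k)" .
qed (use G in \<open>auto simp: gram_def std_basis_def\<close>)

lemma wedge_norm_std_basis_adjoint:
  fixes sp1 sp2 :: "'a::{conjugatable_field,real_normed_field} vec \<Rightarrow> 'a vec \<Rightarrow> 'a"
  assumes norm_conj: "\<And>z::'a. norm (conjugate z) = norm z"
    and sp2: "scalar_product m sp2"
    and G: "G \<in> carrier_mat m m" and G': "G' \<in> carrier_mat m m" and inv: "G' * G = 1\<^sub>m m"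
    and adjoint: "\<forall>u\<in>carrier_vec m. \<forall>v\<in>carrier_vec m. sp2 (G *\<^sub>v u) v = sp1 u (G' *\<^sub>v v)"
  shows "wedge_norm sp1 (std_basis m) = norm (det G) * wedge_norm sp2 (std_basis m)"
proof -
  let ?G2 = "gram sp2 (std_basis m)"
  have G2: "?G2 \<in> carrier_mat m m" unfolding gram_std_basis[OF sp2] by simp
  have "det (gram sp1 (std_basis m)) = det (transpose_mat G) * det ?G2 * det (map_mat conjugate G)"
    unfolding gram_std_basis_adjoint[OF sp2 G G' inv adjoint] using G G2 by (simp add: det_mult[of _ m])
  also have "\<dots> = det G * det ?G2 * conjugate (det G)"
    using G by (simp add: det_transpose det_map_mat_conjugate)
  finally have "norm (det (gram sp1 (std_basis m))) = (norm (det G))\<^sup>2 * norm (det ?G2)"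
    by (simp add: norm_mult norm_conj power2_eq_square)
  thus ?thesis unfolding wedge_norm_def by (simp add: real_sqrt_mult)
qed

lemma chirality_inverse:
  fixes Gam :: "nat \<Rightarrow> 'a::field mat"
  assumes ch: "chirality d n Gam" and j: "j \<le> d"
  shows "n (d - j) = n j" and "Gam j \<in> carrier_mat (n j) (n j)"
    and "Gam (d - j) \<in> carrier_mat (n j) (n j)" and "Gam (d - j) * Gam j = 1\<^sub>m (n j)"
proof -
  have Gam: "Gam i \<in> carrier_mat (n (d - i)) (n i) \<and> Gam (d - i) * Gam i = 1\<^sub>m (n i)" if "i \<le> d" for i
    using ch that unfolding chirality_def by blast
  have "d - j \<le> d" and dd: "d - (d - j) = j" using j by auto
  hence G: "Gam j \<in> carrier_mat (n (d - j)) (n j)" and G': "Gam (d - j) \<in> carrier_mat (n j) (n (d - j))"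
    and inv: "Gam (d - j) * Gam j = 1\<^sub>m (n j)" and inv': "Gam j * Gam (d - j) = 1\<^sub>m (n (d - j))"
    using Gam[OF j] Gam[of "d - j"] by simp_all
  show dim: "n (d - j) = n j"
    using mat_left_inverse_imp_le[OF G G' inv] mat_left_inverse_imp_le[OF G' G inv'] by simp
  show "Gam j \<in> carrier_mat (n j) (n j)" "Gam (d - j) \<in> carrier_mat (n j) (n j)"
    using G G' unfolding dim by simp_all
  show "Gam (d - j) * Gam j = 1\<^sub>m (n j)" by (rule inv)
qed

lemma chirality_det_nonzero:
  fixes Gam :: "nat \<Rightarrow> 'a::field mat"
  assumes "chirality d n Gam" and "j \<le> d"
  shows "det (Gam j) \<noteq> 0"
proof -
  have "det (Gam (d - j)) * det (Gam j) = 1"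
    using det_mult[OF chirality_inverse(3,2)[OF assms]] chirality_inverse(4)[OF assms] by simp
  thus ?thesis by auto
qed

lemma wedge_norm_chirality:
  fixes Gam :: "nat \<Rightarrow> 'a::{conjugatable_field,real_normed_field} mat"
  assumes norm_conj: "\<And>z::'a. norm (conjugate z) = norm z"
    and ch: "chirality d n Gam" and sp: "\<forall>j\<le>d. scalar_product (n j) (sp j)"
    and self_adjoint: "\<forall>j\<le>d. \<forall>u \<in> carrier_vec (n j). \<forall>v \<in> carrier_vec (n (d - j)).
          sp (d - j) (Gam j *\<^sub>v u) v = sp j u (Gam (d - j) *\<^sub>v v)"
    and j: "j \<le> d"
  shows "wedge_norm (sp j) (std_basis (n j)) =
    norm (det (Gam j)) * wedge_norm (sp (d - j)) (std_basis (n (d - j)))"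
proof -
  note dim = chirality_inverse(1)[OF ch j]
  have "scalar_product (n j) (sp (d - j))" using sp dim by (metis diff_le_self)
  moreover have "\<forall>u \<in> carrier_vec (n j). \<forall>v \<in> carrier_vec (n j).
      sp (d - j) (Gam j *\<^sub>v u) v = sp j u (Gam (d - j) *\<^sub>v v)"
    using self_adjoint j dim by simp
  ultimately show ?thesis
    using wedge_norm_std_basis_adjoint[OF norm_conj _ chirality_inverse(2-4)[OF ch j]] dim by simp
qed

lemma prod_atMost_reflect_pairs:
  fixes f :: "nat \<Rightarrow> 'b::comm_monoid_mult"
  assumes "1 \<le> r" and "d = 2 * r - 1"
  shows "(\<Prod>j\<le>d. f j) = (\<Prod>j<r. f j * f (d - j))"
proof -
  have split: "{..d} = {..<r} \<union> {r..d}" using assms by auto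
  have "(\<Prod>j\<le>d. f j) = (\<Prod>j<r. f j) * (\<Prod>j\<in>{r..d}. f j)"
    unfolding split by (rule prod.union_disjoint) auto
  also have "(\<Prod>j\<in>{r..d}. f j) = (\<Prod>j<r. f (d - j))"
    by (rule prod.reindex_bij_witness[of _ "\<lambda>j. d - j" "\<lambda>j. d - j"]) (use assms in auto)
  finally show ?thesis by (simp add: prod.distrib)
qed

lemma norm_sgnpow: "norm (sgnpow j (x::'a::real_normed_field)) = sgnpow j (norm x)"
  unfolding sgnpow_def by (simp add: norm_inverse)

lemma sgnpow_opposite_parity_cancel:
  fixes a b w :: real
  assumes "a > 0" "b > 0" "w > 0" "even e \<longleftrightarrow> odd j"
  shows "sgnpow j a * sgnpow e (a * b) * (sgnpow j (b * w) * sgnpow e w) = 1"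
  using assms unfolding sgnpow_def by (auto simp: field_simps)

lemma detC_norm_c_Gamma:
  fixes Gam :: "nat \<Rightarrow> 'a::{conjugatable_field,real_normed_field} mat"
  assumes norm_conj: "\<And>z::'a. norm (conjugate z) = norm z"
    and r: "1 \<le> r" and d: "d = 2 * r - 1"
    and ch: "chirality d n Gam" and sp: "\<forall>j\<le>d. scalar_product (n j) (sp j)"
    and self_adjoint: "\<forall>j\<le>d. \<forall>u \<in> carrier_vec (n j). \<forall>v \<in> carrier_vec (n (d - j)).
          sp (d - j) (Gam j *\<^sub>v u) v = sp j u (Gam (d - j) *\<^sub>v v)"
    and g: "\<forall>j<r. g j \<noteq> 0"
  shows "detC_norm d n sp (c_Gamma r d n Gam g) = 1"
proof -
  define w where "w j = wedge_norm (sp j) (std_basis (n j))" for j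
  have pair: "sgnpow j (norm (g j)) * sgnpow (d - j) (norm (g j) * norm (det (Gam j))) *
      (sgnpow j (w j) * sgnpow (d - j) (w (d - j))) = 1" if "j < r" for j
  proof -
    have j: "j \<le> d" and "even (d - j) \<longleftrightarrow> odd j" using that r d by presburger+
    moreover have "w j = norm (det (Gam j)) * w (d - j)"
      unfolding w_def by (rule wedge_norm_chirality[OF norm_conj ch sp self_adjoint j])
    moreover have "w (d - j) > 0" using sp unfolding w_def by (simp add: wedge_norm_std_basis_pos)
    ultimately show ?thesis
      using sgnpow_opposite_parity_cancel g that chirality_det_nonzero[OF ch j] by simp
  qed
  have "detC_norm d n sp (c_Gamma r d n Gam g) =
      (\<Prod>j<r. sgnpow j (norm (g j)) * sgnpow (d - j) (norm (g j) * norm (det (Gam j)))) *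
      (\<Prod>j<r. sgnpow j (w j) * sgnpow (d - j) (w (d - j)))"
    unfolding detC_norm_def c_Gamma_def w_def prod_atMost_reflect_pairs[OF r d]
    by (simp add: norm_mult norm_power prod_norm[symmetric] norm_sgnpow)
  also have "\<dots> = 1"
    unfolding prod.distrib[symmetric] by (rule prod.neutral) (simp add: pair)
  finally show ?thesis .
qed

lemma lemma4p3_claim_if_norm_conjugate:
  assumes "\<And>z::'a::{conjugatable_field,real_normed_field}. norm (conjugate z) = norm z"
  shows "lemma4p3_claim TYPE('a)"
  unfolding lemma4p3_claim_def rho_Gamma_def
  using detH_norm_phiC detC_norm_c_Gamma[OF assms] by metis

theorem lemma4p3:
  shows "lemma4p3_claim TYPE(real) \<and> lemma4p3_claim TYPE(complex)"
  by (intro conjI lemma4p3_claim_if_norm_conjugate) simp_all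

end
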